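(* Let $T$ be a tree of diameter $d$ on $n$ vertices with maximum Wiener index. Let $x$ be a special vertex of $T$ and let $T_1,T_2$ be components of $T-x$ such that each of them contains exactly one broom vertex of $T$ and $d(y,y')<d$ for all leaves $y\in V(T_1)$, $y'\in V(T_2)$. Let $y_1\in V(T_1)$, $y_2\in V(T_2)$ be leaves of $T$, $y_1'$ the broom vertex adjacent to $y_1$, $p=d(x,y_1)=d(x,y_2)$, and $t_i$ the number of leaves of $T$ in $T_i$ ($i\in\{1,2\}$). Let $T'=T_2\xrightarrow{T} y_1'$. If $t_1=t_2$, then $W(T)\geq W(T')$ if and only if $$t_1\geq \sqrt{\frac{p(3n+2p-7)}{12}}-p+1.$$
   Context: All graphs are finite and simple; $d(u,v)$ denotes distance and $W(G)=\sum_{\{u,v\}\subseteq V(G)} d(u,v)$ is the Wiener index. A tree $T$ of order $n$ and diameter $d$ has maximum Wiener index if $W(T')\leq W(T)$ for every tree $T'$ of order $n$ and diameter $d$. A leaf is a vertex of degree $1$; a broom vertex of $T$ is a vertex adjacent to a leaf of $T$. A vertex $x$ of a tree $T$ of diameter $d$ is special if $\deg(x)\geq 3$ and there exist components $T_1,T_2$ of $T-x$ such that each contains exactly one broom vertex of $T$ and $d(y,y')<d$ for all leaves $y\in V(T_1)$, $y'\in V(T_2)$. For such $x,T_1,T_2$ and the broom vertex $y_1'$ of $T_1$, the tree $T_2\xrightarrow{T} y_1'$ is obtained from $T$ by deleting all vertices of $T_2$ and attaching $|V(T_2)|$ new leaves to $y_1'$. *)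

theory Defs
  imports Complex_Main
begin

definition is_walk :: "'a set \<Rightarrow> 'a set set \<Rightarrow> 'a list \<Rightarrow> bool" where
  "is_walk V E xs \<longleftrightarrow> xs \<noteq> [] \<and> set xs \<subseteq> V \<and>
     (\<forall>i < length xs - 1. {xs ! i, xs ! Suc i} \<in> E)"

definition simple_graph :: "'a set \<Rightarrow> 'a set set \<Rightarrow> bool" where
  "simple_graph V E \<longleftrightarrow> finite V \<and> (\<forall>e\<in>E. \<exists>u v. u \<in> V \<and> v \<in> V \<and> u \<noteq> v \<and> e = {u, v})"

definition graph_connected :: "'a set \<Rightarrow> 'a set set \<Rightarrow> bool" where
  "graph_connected V E \<longleftrightarrow>
     (\<forall>u\<in>V. \<forall>v\<in>V. \<exists>xs. is_walk V E xs \<and> hd xs = u \<and> last xs = v)"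

definition has_cycle :: "'a set \<Rightarrow> 'a set set \<Rightarrow> bool" where
  "has_cycle V E \<longleftrightarrow>
     (\<exists>xs. is_walk V E xs \<and> distinct xs \<and> length xs \<ge> 3 \<and> {last xs, hd xs} \<in> E)"

definition is_tree :: "'a set \<Rightarrow> 'a set set \<Rightarrow> bool" where
  "is_tree V E \<longleftrightarrow> simple_graph V E \<and> V \<noteq> {} \<and> graph_connected V E \<and> \<not> has_cycle V E"

definition gdist :: "'a set \<Rightarrow> 'a set set \<Rightarrow> 'a \<Rightarrow> 'a \<Rightarrow> nat" where
  "gdist V E u v = (LEAST k. \<exists>xs. is_walk V E xs \<and> hd xs = u \<and> last xs = v \<and> length xs = Suc k)"

definition diameter :: "'a set \<Rightarrow> 'a set set \<Rightarrow> nat" where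
  "diameter V E = Max {gdist V E u v | u v. u \<in> V \<and> v \<in> V}"

text \<open>Wiener index: sum of distances over unordered pairs of distinct vertices
  (the ordered double sum counts each unordered pair twice, diagonal terms are 0).\<close>
definition wiener :: "'a set \<Rightarrow> 'a set set \<Rightarrow> nat" where
  "wiener V E = (\<Sum>u\<in>V. \<Sum>v\<in>V. gdist V E u v) div 2"

definition max_wiener_tree :: "'a set \<Rightarrow> 'a set set \<Rightarrow> bool" where
  "max_wiener_tree V E \<longleftrightarrow> is_tree V E \<and>
     (\<forall>(V'::'a set) (E'::'a set set). is_tree V' E' \<and> card V' = card V \<and> diameter V' E' = diameter V E
        \<longrightarrow> wiener V' E' \<le> wiener V E)"

definition degree :: "'a set \<Rightarrow> 'a set set \<Rightarrow> 'a \<Rightarrow> nat" where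
  "degree V E v = card {u \<in> V. {u, v} \<in> E}"

definition is_leaf :: "'a set \<Rightarrow> 'a set set \<Rightarrow> 'a \<Rightarrow> bool" where
  "is_leaf V E v \<longleftrightarrow> v \<in> V \<and> degree V E v = 1"

definition is_broom :: "'a set \<Rightarrow> 'a set set \<Rightarrow> 'a \<Rightarrow> bool" where
  "is_broom V E v \<longleftrightarrow> v \<in> V \<and> (\<exists>y. is_leaf V E y \<and> {v, y} \<in> E)"

definition is_component :: "'a set \<Rightarrow> 'a set set \<Rightarrow> 'a set \<Rightarrow> bool" where
  "is_component S F C \<longleftrightarrow>
     (\<exists>v\<in>S. C = {u. \<exists>xs. is_walk S F xs \<and> hd xs = v \<and> last xs = u})"

definition comp_minus :: "'a set \<Rightarrow> 'a set set \<Rightarrow> 'a \<Rightarrow> 'a set \<Rightarrow> bool" where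
  "comp_minus V E x C \<longleftrightarrow> is_component (V - {x}) {e \<in> E. x \<notin> e} C"

definition special_pair :: "'a set \<Rightarrow> 'a set set \<Rightarrow> 'a \<Rightarrow> 'a set \<Rightarrow> 'a set \<Rightarrow> bool" where
  "special_pair V E x T1 T2 \<longleftrightarrow>
     T1 \<noteq> T2 \<and> comp_minus V E x T1 \<and> comp_minus V E x T2 \<and>
     card {b \<in> T1. is_broom V E b} = 1 \<and> card {b \<in> T2. is_broom V E b} = 1 \<and>
     (\<forall>y\<in>T1. \<forall>y'\<in>T2. is_leaf V E y \<longrightarrow> is_leaf V E y' \<longrightarrow> gdist V E y y' < diameter V E)"

definition is_special :: "'a set \<Rightarrow> 'a set set \<Rightarrow> 'a \<Rightarrow> bool" where
  "is_special V E x \<longleftrightarrow> x \<in> V \<and> degree V E x \<ge> 3 \<and> (\<exists>T1 T2. special_pair V E x T1 T2)"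

text \<open>The tree T2 -> y1': delete V(T2) and attach the new leaves L (|L| = |V(T2)|) to y1'.\<close>
definition move_verts :: "'a set \<Rightarrow> 'a set \<Rightarrow> 'a set \<Rightarrow> 'a set" where
  "move_verts V T2 L = (V - T2) \<union> L"

definition move_edges :: "'a set set \<Rightarrow> 'a set \<Rightarrow> 'a \<Rightarrow> 'a set \<Rightarrow> 'a set set" where
  "move_edges E T2 y L = {e \<in> E. e \<inter> T2 = {}} \<union> {{y, l} | l. l \<in> L}"

end

theory Submission
  imports Defs
begin

text \<open>The hypotheses force \<open>T1\<close> and \<open>T2\<close> to be brooms: a path of \<open>q = p - 1\<close> vertices
  hanging from \<open>x\<close> and ending in the broom vertex, which carries \<open>t\<close> pendant leaves. In \<open>T'\<close>
  the \<open>m = q + t\<close> vertices of \<open>T2\<close> become leaves at \<open>y1'\<close>; distances inside \<open>V - T2\<close> do not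
  change, and every other distance is explicit in \<open>q\<close>, \<open>t\<close> and the distances to \<open>x\<close> and \<open>y1'\<close>.
  Adding up all distances (each unordered pair counted twice) gives
  \<open>3 (2 W(T') - 2 W(T)) = q ((q + 1) (3 n + 2 q - 5) - 12 m\<^sup>2)\<close>,
  so \<open>W(T') \<le> W(T)\<close> iff \<open>p (3 n + 2 p - 7) \<le> 12 (t + p - 1)\<^sup>2\<close>.\<close>

section \<open>Walks and distances\<close>

lemma is_walk_Nil [simp]: "\<not> is_walk V E []"
  by (simp add: is_walk_def)

lemma is_walk_singleton [simp]: "is_walk V E [a] \<longleftrightarrow> a \<in> V"
  by (auto simp: is_walk_def)

lemma is_walk_Cons_Cons [simp]:
  "is_walk V E (a # b # xs) \<longleftrightarrow> a \<in> V \<and> {a, b} \<in> E \<and> is_walk V E (b # xs)"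
  by (auto simp: is_walk_def All_less_Suc2)

lemma is_walk_append_iff:
  "xs \<noteq> [] \<Longrightarrow> ys \<noteq> [] \<Longrightarrow>
   is_walk V E (xs @ ys) \<longleftrightarrow> is_walk V E xs \<and> is_walk V E ys \<and> {last xs, hd ys} \<in> E"
proof (induction xs rule: induct_list012)
  case (2 a)
  then show ?case by (cases ys) auto
qed auto

lemma is_walk_rev: "is_walk V E xs \<Longrightarrow> is_walk V E (rev xs)"
proof (induction xs rule: induct_list012)
  case (3 a b xs)
  then show ?case
    using is_walk_append_iff[of "rev (b # xs)" "[a]" V E] by (simp add: insert_commute)
qed auto

lemma is_walk_take: "is_walk V E xs \<Longrightarrow> 0 < k \<Longrightarrow> is_walk V E (take k xs)"
  using is_walk_append_iff[of "take k xs" "drop k xs" V E]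
  by (cases "k < length xs"; cases xs) auto

lemma is_walk_drop: "is_walk V E xs \<Longrightarrow> k < length xs \<Longrightarrow> is_walk V E (drop k xs)"
  using is_walk_append_iff[of "take k xs" "drop k xs" V E]
  by (cases "k = 0"; cases xs) auto

lemma is_walk_mono: "is_walk V E xs \<Longrightarrow> V \<subseteq> V' \<Longrightarrow> E \<subseteq> E' \<Longrightarrow> is_walk V' E' xs"
  unfolding is_walk_def by blast

lemma is_walk_join:
  assumes "is_walk V E xs" "is_walk V E ys" "last xs = hd ys"
  shows "is_walk V E (xs @ tl ys)"
proof (cases "tl ys")
  case Nil
  then show ?thesis using assms by simp
next
  case (Cons c zs)
  then have "ys = hd ys # c # zs" using assms(2) by (cases ys) auto
  then show ?thesis
    using assms is_walk_Cons_Cons[of V E "hd ys" c zs] is_walk_append_iff[of xs "tl ys" V E] Cons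
    by (cases xs) auto
qed

lemma hd_join: "xs \<noteq> [] \<Longrightarrow> hd (xs @ tl ys) = hd xs"
  by (cases xs) auto

lemma last_join: "xs \<noteq> [] \<Longrightarrow> ys \<noteq> [] \<Longrightarrow> last xs = hd ys \<Longrightarrow> last (xs @ tl ys) = last ys"
  by (cases ys) auto

lemma distinct_walk_exists:
  "is_walk V E xs \<Longrightarrow> \<exists>ys. is_walk V E ys \<and> distinct ys \<and> hd ys = hd xs \<and> last ys = last xs"
proof (induction "length xs" arbitrary: xs rule: less_induct)
  case less
  show ?case
  proof (cases "distinct xs")
    case False
    then obtain as y bs cs where xs: "xs = as @ [y] @ bs @ [y] @ cs"
      using not_distinct_decomp by blast
    have "is_walk V E (as @ [y])" "is_walk V E ([y] @ cs)"
      using less.prems is_walk_append_iff[of "as @ [y]" "bs @ [y] @ cs" V E]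
        is_walk_append_iff[of "as @ [y] @ bs" "[y] @ cs" V E] xs by auto
    then have "is_walk V E (as @ [y] @ cs)"
      using is_walk_join[of V E "as @ [y]" "[y] @ cs"] by simp
    moreover have "hd (as @ [y] @ cs) = hd xs" "last (as @ [y] @ cs) = last xs"
      unfolding xs by (cases as) simp_all
    ultimately show ?thesis using less.hyps[of "as @ [y] @ cs"] xs by fastforce
  qed (use less.prems in blast)
qed

definition reachable :: "'a set \<Rightarrow> 'a set set \<Rightarrow> 'a \<Rightarrow> 'a \<Rightarrow> bool" where
  "reachable V E u v \<longleftrightarrow> (\<exists>xs. is_walk V E xs \<and> hd xs = u \<and> last xs = v)"

lemma reachableI: "is_walk V E xs \<Longrightarrow> hd xs = u \<Longrightarrow> last xs = v \<Longrightarrow> reachable V E u v"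
  unfolding reachable_def by blast

lemma reachable_edge: "{u, v} \<in> E \<Longrightarrow> u \<in> V \<Longrightarrow> v \<in> V \<Longrightarrow> reachable V E u v"
  by (rule reachableI[of V E "[u, v]"]) auto

lemma reachable_sym: "reachable V E u v \<Longrightarrow> reachable V E v u"
  unfolding reachable_def
  by (metis is_walk_rev hd_rev last_rev)

lemma reachable_trans: "reachable V E u v \<Longrightarrow> reachable V E v w \<Longrightarrow> reachable V E u w"
  unfolding reachable_def
  by (metis is_walk_join is_walk_Nil hd_join last_join)

lemma reachable_in: "reachable V E u v \<Longrightarrow> u \<in> V \<and> v \<in> V"
  unfolding reachable_def is_walk_def by (metis hd_in_set last_in_set subsetD)

lemma gdist_le_walk:
  assumes "is_walk V E xs" "hd xs = u" "last xs = v"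
  shows "gdist V E u v \<le> length xs - 1"
proof -
  have "length xs = Suc (length xs - 1)" using assms(1) by (cases xs) auto
  then show ?thesis unfolding gdist_def using assms by (intro Least_le) blast
qed

lemma shortest_walk_exists:
  assumes "reachable V E u v"
  shows "\<exists>xs. is_walk V E xs \<and> hd xs = u \<and> last xs = v \<and> length xs = Suc (gdist V E u v)"
proof -
  obtain xs where xs: "is_walk V E xs" "hd xs = u" "last xs = v"
    using assms unfolding reachable_def by blast
  then have "length xs = Suc (length xs - 1)" by (cases xs) auto
  with xs have "\<exists>k xs. is_walk V E xs \<and> hd xs = u \<and> last xs = v \<and> length xs = Suc k"
    by blast
  then show ?thesis unfolding gdist_def by (rule LeastI_ex)
qed

lemma gdist_le_walk_prefix:
  assumes "is_walk V E xs" "i < length xs"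
  shows "gdist V E (hd xs) (xs ! i) \<le> i"
proof -
  have "hd (take (Suc i) xs) = hd xs" using assms by (cases xs) simp_all
  moreover have "last (take (Suc i) xs) = xs ! i" by (simp add: take_Suc_conv_app_nth[OF assms(2)])
  ultimately show ?thesis
    using gdist_le_walk[OF is_walk_take[OF assms(1), of "Suc i"]] assms(2) by simp
qed

lemma gdist_le_walk_suffix:
  assumes "is_walk V E xs" "i < length xs"
  shows "gdist V E (xs ! i) (last xs) \<le> length xs - 1 - i"
proof -
  have "hd (drop i xs) = xs ! i" "last (drop i xs) = last xs"
    using assms(2) by (simp_all add: hd_drop_conv_nth)
  then show ?thesis using gdist_le_walk[OF is_walk_drop[OF assms]] by simp
qed

lemma gdist_commute: "gdist V E u v = gdist V E v u"
proof -
  have rev_walk: "\<exists>xs. is_walk V E xs \<and> hd xs = v \<and> last xs = u \<and> length xs = k"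
    if "is_walk V E xs" "hd xs = u" "last xs = v" "length xs = k" for u v k xs
    using that by (intro exI[of _ "rev xs"]) (simp add: is_walk_rev hd_rev last_rev)
  have "(\<exists>xs. is_walk V E xs \<and> hd xs = u \<and> last xs = v \<and> length xs = k) \<longleftrightarrow>
        (\<exists>xs. is_walk V E xs \<and> hd xs = v \<and> last xs = u \<and> length xs = k)" for k
    using rev_walk by meson
  then show ?thesis unfolding gdist_def by presburger
qed

lemma gdist_triangle:
  assumes "reachable V E u v" "reachable V E v w"
  shows "gdist V E u w \<le> gdist V E u v + gdist V E v w"
proof -
  obtain xs where xs: "is_walk V E xs" "hd xs = u" "last xs = v" "length xs = Suc (gdist V E u v)"
    using shortest_walk_exists[OF assms(1)] by blast
  obtain ys where ys: "is_walk V E ys" "hd ys = v" "last ys = w" "length ys = Suc (gdist V E v w)"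
    using shortest_walk_exists[OF assms(2)] by blast
  have "xs \<noteq> []" "ys \<noteq> []" using xs ys by auto
  then have "gdist V E u w \<le> length (xs @ tl ys) - 1"
    using xs ys by (intro gdist_le_walk is_walk_join) (auto simp: hd_join last_join)
  then show ?thesis using xs ys by simp
qed

lemma gdist_self: "u \<in> V \<Longrightarrow> gdist V E u u = 0"
  using gdist_le_walk[of V E "[u]" u u] by simp

lemma gdist_eq_0D: "reachable V E u v \<Longrightarrow> gdist V E u v = 0 \<Longrightarrow> u = v"
  using shortest_walk_exists[of V E u v] by (auto simp: length_Suc_conv)

lemma gdist_edge_le: "{u, v} \<in> E \<Longrightarrow> u \<in> V \<Longrightarrow> v \<in> V \<Longrightarrow> gdist V E u v \<le> 1"
  using gdist_le_walk[of V E "[u, v]" u v] by simp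

lemma gdist_last_edge:
  assumes "reachable V E u v" "u \<noteq> v"
  obtains z where "{z, v} \<in> E" "z \<in> V" "reachable V E u z" "gdist V E u z + 1 = gdist V E u v"
proof -
  obtain P where P: "is_walk V E P" "hd P = u" "last P = v" "length P = Suc (gdist V E u v)"
    using shortest_walk_exists[OF assms(1)] by blast
  define B where "B = butlast P"
  have PB: "P = B @ [v]" unfolding B_def using P by (metis append_butlast_last_id is_walk_Nil)
  have "B \<noteq> []" using P PB assms(2) by auto
  then have B: "is_walk V E B" "{last B, v} \<in> E" "hd B = u"
    using is_walk_append_iff[of B "[v]" V E] P PB by auto
  have zV: "last B \<in> V" using B(1) \<open>B \<noteq> []\<close> unfolding is_walk_def by auto
  have rz: "reachable V E u (last B)" using B by (intro reachableI) auto
  have "gdist V E u v \<le> gdist V E u (last B) + gdist V E (last B) v"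
    using gdist_triangle[OF rz reachable_edge[OF B(2) zV]] reachable_in[OF assms(1)] by simp
  moreover have "gdist V E (last B) v \<le> 1"
    using gdist_edge_le[OF B(2) zV] reachable_in[OF assms(1)] by simp
  moreover have "gdist V E u (last B) \<le> gdist V E u v - 1"
    using gdist_le_walk[OF B(1,3)] PB P by simp
  moreover have "gdist V E u v \<noteq> 0" using gdist_eq_0D[OF assms(1)] assms(2) by blast
  ultimately show ?thesis using that B(2) zV rz by simp
qed

lemma gdist_pendant:
  assumes "{l, b} \<in> E" "\<And>w. {l, w} \<in> E \<Longrightarrow> w = b" "reachable V E l v" "v \<noteq> l"
  shows "gdist V E l v = gdist V E b v + 1"
proof -
  obtain z where "{z, l} \<in> E" "gdist V E v z + 1 = gdist V E v l"
    using gdist_last_edge[OF reachable_sym[OF assms(3)] assms(4)] by blast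
  moreover from this have "z = b" using assms(2) by (simp add: insert_commute)
  ultimately show ?thesis by (metis gdist_commute)
qed

lemma gdist_image_le:
  assumes "reachable V E u v" "\<And>a. a \<in> V \<Longrightarrow> f a \<in> V'"
    "\<And>a b. {a, b} \<in> E \<Longrightarrow> a \<in> V \<Longrightarrow> b \<in> V \<Longrightarrow> f a = f b \<or> {f a, f b} \<in> E'"
  shows "reachable V' E' (f u) (f v) \<and> gdist V' E' (f u) (f v) \<le> gdist V E u v"
proof -
  have walk_image: "\<exists>ys. is_walk V' E' ys \<and> hd ys = f (hd xs) \<and> last ys = f (last xs) \<and>
      length ys \<le> length xs" if "is_walk V E xs" for xs
    using that
  proof (induction xs rule: induct_list012)
    case (2 a)
    then show ?case using assms(2) by (intro exI[of _ "[f a]"]) auto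
  next
    case (3 a c zs)
    then obtain ys where ys: "is_walk V' E' ys" "hd ys = f c" "last ys = f (last (c # zs))"
        "length ys \<le> length (c # zs)"
      by auto
    then have "ys \<noteq> []" by auto
    show ?case
    proof (cases "f a = f c")
      case True
      then show ?thesis using ys by (intro exI[of _ ys]) auto
    next
      case False
      have "c \<in> V" using "3.prems" by (auto simp: is_walk_def)
      then have "{f a, f c} \<in> E'" using assms(3)[of a c] "3.prems" False by auto
      then have "is_walk V' E' (f a # ys)"
        using ys \<open>ys \<noteq> []\<close> assms(2)[of a] "3.prems" by (cases ys) auto
      then show ?thesis using ys \<open>ys \<noteq> []\<close> by (intro exI[of _ "f a # ys"]) auto
    qed
  qed simp
  obtain xs where xs: "is_walk V E xs" "hd xs = u" "last xs = v" "length xs = Suc (gdist V E u v)"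
    using shortest_walk_exists[OF assms(1)] by blast
  obtain ys where ys: "is_walk V' E' ys" "hd ys = f u" "last ys = f v" "length ys \<le> length xs"
    using walk_image[OF xs(1)] xs by auto
  show ?thesis using gdist_le_walk[OF ys(1-3)] reachableI[OF ys(1-3)] ys xs by auto
qed

section \<open>Trees rooted at a vertex\<close>

locale tree =
  fixes V :: "'a set" and E :: "'a set set"
  assumes is_tree: "is_tree V E"
begin

abbreviation d where "d \<equiv> gdist V E"

lemma finite_V: "finite V"
  using is_tree by (simp add: is_tree_def simple_graph_def)

lemma edge_endpoints: "{a, b} \<in> E \<Longrightarrow> a \<in> V \<and> b \<in> V \<and> a \<noteq> b"
proof -
  assume "{a, b} \<in> E"
  then obtain u v where "u \<in> V" "v \<in> V" "u \<noteq> v" "{a, b} = {u, v}"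
    using is_tree unfolding is_tree_def simple_graph_def by blast
  then show ?thesis by (auto simp: doubleton_eq_iff)
qed

lemma reachable: "u \<in> V \<Longrightarrow> v \<in> V \<Longrightarrow> reachable V E u v"
  using is_tree unfolding is_tree_def graph_connected_def reachable_def by blast

lemma d_triangle: "u \<in> V \<Longrightarrow> v \<in> V \<Longrightarrow> w \<in> V \<Longrightarrow> d u w \<le> d u v + d v w"
  using gdist_triangle reachable by metis

lemma d_edge: "{u, v} \<in> E \<Longrightarrow> d u v = 1"
  using gdist_edge_le[of u v E V] gdist_eq_0D[OF reachable, of u v] edge_endpoints[of u v]
  by fastforce

lemma d_eq_0_iff: "u \<in> V \<Longrightarrow> v \<in> V \<Longrightarrow> d u v = 0 \<longleftrightarrow> u = v"
  using gdist_eq_0D reachable gdist_self by metis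

text \<open>Acyclicity in the form used below: a walk that leaves \<open>a\<close> other than along the edge
  \<open>{a, c}\<close> cannot reach \<open>c\<close> without returning to \<open>a\<close>.\<close>

lemma no_detour:
  assumes w: "is_walk V E (a # ys)" and "a \<notin> set ys" "ys \<noteq> []" "hd ys \<noteq> c" "last ys = c"
    and ac: "{a, c} \<in> E"
  shows False
proof -
  let ?E = "E - {{a, c}}"
  have "{(a # ys) ! i, (a # ys) ! Suc i} \<noteq> {a, c}" if i: "i < length ys" for i
  proof (cases i)
    case 0
    then show ?thesis using assms(3,4) by (auto simp: hd_conv_nth doubleton_eq_iff)
  next
    case (Suc j)
    then have "(a # ys) ! i \<in> set ys" "(a # ys) ! Suc i \<in> set ys" using i by auto
    then show ?thesis using assms(2) by (auto simp: doubleton_eq_iff)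
  qed
  then have "is_walk V ?E (a # ys)" using w unfolding is_walk_def by auto
  then obtain zs where zs: "is_walk V ?E zs" "distinct zs" "hd zs = a" "last zs = c"
    using distinct_walk_exists assms(3,5) by fastforce
  have "a \<noteq> c" using assms(2,3,5) last_in_set by metis
  have "length zs \<noteq> 1"
    using zs(3,4) \<open>a \<noteq> c\<close> by (auto simp: length_Suc_conv)
  moreover have "length zs \<noteq> 2"
  proof
    assume "length zs = 2"
    then obtain p q where "zs = [p, q]" by (auto simp: length_Suc_conv numeral_2_eq_2)
    then show False using zs(1,3,4) by simp
  qed
  moreover have "length zs \<noteq> 0" using zs(1) by auto
  ultimately have "length zs \<ge> 3" by linarith
  moreover have "is_walk V E zs" using zs(1) by (rule is_walk_mono) auto
  moreover have "{last zs, hd zs} \<in> E" using zs(3,4) ac by (simp add: insert_commute)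
  ultimately have "has_cycle V E" unfolding has_cycle_def using zs(2) by blast
  then show False using is_tree unfolding is_tree_def by blast
qed

lemma leaf_neighbour_unique:
  assumes "is_leaf V E l" "{w, l} \<in> E" "{w', l} \<in> E"
  shows "w = w'"
proof -
  obtain z where "{u \<in> V. {u, l} \<in> E} = {z}"
    using assms(1) unfolding is_leaf_def degree_def by (auto simp: card_1_singleton_iff)
  moreover have "w \<in> V" "w' \<in> V" using edge_endpoints assms by auto
  ultimately have "w \<in> {z}" "w' \<in> {z}" using assms(2,3) by blast+
  then show ?thesis by simp
qed

end

locale rooted_tree = tree +
  fixes x assumes root_in_V: "x \<in> V"
begin

definition geodesic where
  "geodesic P v \<longleftrightarrow> is_walk V E P \<and> hd P = x \<and> last P = v \<and> length P = Suc (d x v)"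

lemma geodesic_exists: "v \<in> V \<Longrightarrow> \<exists>P. geodesic P v"
  unfolding geodesic_def by (rule shortest_walk_exists[OF reachable[OF root_in_V]])

lemma geodesic_nth_depth:
  assumes "geodesic P v" "i < length P"
  shows "d x (P ! i) = i"
proof -
  have P: "is_walk V E P" "hd P = x" "last P = v" "length P = Suc (d x v)"
    using assms(1) geodesic_def by auto
  have "P ! i \<in> V" "v \<in> V"
    using P assms(2) nth_mem last_in_set[of P] unfolding is_walk_def by auto
  then have "d x v \<le> d x (P ! i) + d (P ! i) v" using d_triangle root_in_V by blast
  moreover have "d x (P ! i) \<le> i" "d (P ! i) v \<le> d x v - i"
    using gdist_le_walk_prefix[OF P(1) assms(2)] gdist_le_walk_suffix[OF P(1) assms(2)] P by simp_all
  ultimately show ?thesis using P(4) assms(2) by linarith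
qed

lemma geodesic_depth_le: "geodesic P v \<Longrightarrow> z \<in> set P \<Longrightarrow> d x z \<le> d x v"
  unfolding in_set_conv_nth using geodesic_nth_depth by (fastforce simp: geodesic_def)

lemma geodesic_depth_eq:
  assumes P: "geodesic P v" and "z \<in> set P" "d x z = d x v"
  shows "z = v"
proof -
  obtain i where i: "i < length P" "P ! i = z" using assms(2) by (auto simp: in_set_conv_nth)
  then have "i = length P - 1" using geodesic_nth_depth[OF P i(1)] assms(3) P by (simp add: geodesic_def)
  moreover have "P \<noteq> []" using P by (auto simp: geodesic_def)
  ultimately show ?thesis using i P last_conv_nth[of P] by (simp add: geodesic_def)
qed

lemma geodesic_butlast_depth: "geodesic P v \<Longrightarrow> z \<in> set (butlast P) \<Longrightarrow> d x z < d x v"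
  unfolding in_set_conv_nth using geodesic_nth_depth by (fastforce simp: geodesic_def nth_butlast)

lemma d_root_eq_0_iff: "u \<in> V \<Longrightarrow> d x u = 0 \<longleftrightarrow> u = x"
  using d_eq_0_iff[OF root_in_V] by auto

lemma closer_neighbour_unique:
  assumes "{u, w1} \<in> E" "{u, w2} \<in> E" "d x w1 < d x u" "d x w2 < d x u"
  shows "w1 = w2"
proof (rule ccontr)
  assume "w1 \<noteq> w2"
  have in_V: "u \<in> V" "w1 \<in> V" "w2 \<in> V" using edge_endpoints assms by auto
  obtain P1 P2 where P: "geodesic P1 w1" "geodesic P2 w2" using geodesic_exists in_V by blast
  then have walks: "is_walk V E P1" "is_walk V E P2" "hd P1 = x" "hd P2 = x" "last P1 = w1"
      "last P2 = w2" "P1 \<noteq> []" "P2 \<noteq> []"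
    unfolding geodesic_def by auto
  define ys where "ys = rev P2 @ tl P1"
  have "is_walk V E ys"
    unfolding ys_def using walks by (intro is_walk_join) (auto simp: is_walk_rev last_rev)
  moreover have "ys \<noteq> []" "hd ys = w2" "last ys = w1"
    unfolding ys_def using walks by (auto simp: hd_join last_join hd_rev last_rev)
  moreover have "u \<notin> set ys"
    using geodesic_depth_le[OF P(1)] geodesic_depth_le[OF P(2)] assms(3,4) list.set_sel(2)[of P1]
    unfolding ys_def by fastforce
  ultimately show False
    using no_detour[of u ys w1] assms(1,2) in_V \<open>w1 \<noteq> w2\<close> by (cases ys) auto
qed

lemma d_root_adjacent_neq:
  assumes e: "{u, w} \<in> E"
  shows "d x u \<noteq> d x w"
proof
  assume eq: "d x u = d x w"
  have in_V: "u \<in> V" "w \<in> V" "u \<noteq> w" using edge_endpoints e by auto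
  then have "d x u \<noteq> 0" using eq d_root_eq_0_iff by metis
  obtain Pu Pw where P: "geodesic Pu u" "geodesic Pw w" using geodesic_exists in_V by blast
  then have walks: "is_walk V E Pu" "is_walk V E Pw" "hd Pu = x" "hd Pw = x" "last Pu = u"
      "last Pw = w" "length Pu = Suc (d x u)" "length Pw = Suc (d x u)"
    unfolding geodesic_def using eq by auto
  have Pw: "Pw = butlast Pw @ [w]" using walks by (metis append_butlast_last_id is_walk_Nil)
  have "length (butlast Pw) = d x u" "length (tl Pu) = d x u" using walks by simp_all
  then have "butlast Pw \<noteq> []" "tl Pu \<noteq> []" using \<open>d x u \<noteq> 0\<close> by (metis list.size(3))+
  define ys where "ys = rev (butlast Pw) @ tl Pu"
  have "w # ys = rev Pw @ tl Pu" unfolding ys_def by (subst (2) Pw) simp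
  then have "is_walk V E (w # ys)"
    using walks by (metis is_walk_join is_walk_rev last_rev)
  moreover have "hd ys \<noteq> u"
    using geodesic_butlast_depth[OF P(2), of "hd ys"] \<open>butlast Pw \<noteq> []\<close> eq
    unfolding ys_def by (auto simp: hd_rev)
  moreover have "last ys = u" unfolding ys_def using walks \<open>tl Pu \<noteq> []\<close> by (simp add: last_tl)
  moreover have "w \<notin> set ys"
    using geodesic_butlast_depth[OF P(2)] geodesic_depth_eq[OF P(1), of w] list.set_sel(2)[of Pu]
      eq in_V(3) unfolding ys_def by fastforce
  ultimately show False
    using no_detour[of w ys u] e \<open>butlast Pw \<noteq> []\<close> by (auto simp: ys_def insert_commute)
qed

lemma d_root_adjacent:
  assumes e: "{u, w} \<in> E"
  shows "d x w = d x u + 1 \<or> d x u = d x w + 1"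
proof -
  have "u \<in> V" "w \<in> V" using edge_endpoints e by auto
  then have "d x w \<le> d x u + d u w" "d x u \<le> d x w + d w u"
    using d_triangle root_in_V by auto
  moreover have "d u w = 1" "d w u = 1" using d_edge e by (auto simp: insert_commute)
  ultimately show ?thesis using d_root_adjacent_neq[OF e] by linarith
qed

definition parent where "parent u = (SOME w. {w, u} \<in> E \<and> d x w + 1 = d x u)"

lemma parent:
  assumes "u \<in> V" "u \<noteq> x"
  shows "{parent u, u} \<in> E" "d x (parent u) + 1 = d x u" "parent u \<in> V"
proof -
  have "\<exists>w. {w, u} \<in> E \<and> d x w + 1 = d x u"
    using gdist_last_edge[OF reachable[OF root_in_V assms(1)]] assms(2) by metis
  then have "{parent u, u} \<in> E \<and> d x (parent u) + 1 = d x u"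
    unfolding parent_def by (rule someI_ex)
  then show "{parent u, u} \<in> E" "d x (parent u) + 1 = d x u" "parent u \<in> V"
    using edge_endpoints by blast+
qed

lemma parent_eqI:
  assumes "{w, u} \<in> E" "d x w < d x u"
  shows "w = parent u"
proof -
  have "u \<in> V" using edge_endpoints assms(1) by auto
  moreover have "u \<noteq> x" using assms(2) gdist_self[OF root_in_V] by auto
  ultimately show ?thesis
    using closer_neighbour_unique[of u w "parent u"] assms parent[of u] by (simp add: insert_commute)
qed

lemma neighbour_parent_or_child: "{w, u} \<in> E \<Longrightarrow> w = parent u \<or> d x w = d x u + 1"
  using d_root_adjacent[of u w] parent_eqI by (auto simp: insert_commute)

lemma leafI_childless:
  assumes "u \<in> V" "u \<noteq> x" "\<And>w. {w, u} \<in> E \<Longrightarrow> d x w \<noteq> d x u + 1"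
  shows "is_leaf V E u"
proof -
  have "{w \<in> V. {w, u} \<in> E} = {parent u}"
    using parent[OF assms(1,2)] neighbour_parent_or_child assms(3) by blast
  then show ?thesis unfolding is_leaf_def degree_def using assms by simp
qed

definition ancestor where "ancestor j v = (parent ^^ j) v"

lemma ancestor_add: "ancestor i (ancestor j v) = ancestor (i + j) v"
  unfolding ancestor_def by (simp add: funpow_add)

lemma ancestor:
  assumes "v \<in> V" "j \<le> d x v"
  shows "ancestor j v \<in> V" "d x (ancestor j v) + j = d x v" "d (ancestor j v) v \<le> j"
proof -
  have "ancestor j v \<in> V \<and> d x (ancestor j v) + j = d x v \<and> d (ancestor j v) v \<le> j"
    using assms(2)
  proof (induction j)
    case 0
    then show ?case using assms(1) gdist_self[of v V E] by (simp add: ancestor_def)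
  next
    case (Suc j)
    define w where "w = ancestor j v"
    have IH: "w \<in> V" "d x w + j = d x v" "d w v \<le> j" using Suc w_def by auto
    then have "w \<noteq> x" using Suc.prems d_root_eq_0_iff by fastforce
    note p = parent[OF IH(1) this]
    have "ancestor (Suc j) v = parent w" unfolding w_def ancestor_def by simp
    moreover have "d (parent w) v \<le> d (parent w) w + d w v" using d_triangle p IH assms by blast
    moreover have "d (parent w) w = 1" using d_edge p by blast
    ultimately show ?case using p IH by simp
  qed
  then show "ancestor j v \<in> V" "d x (ancestor j v) + j = d x v" "d (ancestor j v) v \<le> j"
    by blast+
qed

lemma ancestor_eqI:
  assumes "u \<in> V" "v \<in> V" "d x v = d x u + d u v"
  shows "u = ancestor (d u v) v"
  using assms(2,3)
proof (induction "d u v" arbitrary: v)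
  case 0
  then have "u = v" using d_eq_0_iff assms(1) by metis
  then show ?case using gdist_self[of v V E] "0.prems"(1) by (simp add: ancestor_def)
next
  case (Suc j)
  have "u \<noteq> v" using Suc.hyps(2) gdist_self[of v V E] Suc.prems(1) by auto
  obtain z where z: "{z, v} \<in> E" "z \<in> V" "d u z + 1 = d u v"
    using gdist_last_edge[OF reachable[OF assms(1) Suc.prems(1)] \<open>u \<noteq> v\<close>] by metis
  have "d x z \<le> d x u + d u z" using d_triangle root_in_V assms(1) z by blast
  moreover have "d x v \<le> d x z + 1"
    using d_triangle[OF root_in_V z(2) Suc.prems(1)] d_edge[OF z(1)] by simp
  ultimately have "d x z = d x u + d u z" "z = parent v"
    using Suc z parent_eqI[OF z(1)] by simp_all
  then have "u = ancestor (d u z) z" using Suc.hyps(1)[of z] z Suc by simp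
  moreover have "ancestor (Suc (d u z)) v = ancestor (d u z) z"
    unfolding ancestor_def using \<open>z = parent v\<close> by (simp add: funpow_Suc_right del: funpow.simps)
  ultimately show ?case using z(3) by simp
qed

end

section \<open>Components of \<open>T - x\<close>\<close>

context rooted_tree
begin

lemma comp_minus_iff_reachable:
  assumes "comp_minus V E x C" "u \<in> C"
  shows "w \<in> C \<longleftrightarrow> reachable (V - {x}) {e \<in> E. x \<notin> e} u w"
proof -
  obtain v where C: "C = {w. reachable (V - {x}) {e \<in> E. x \<notin> e} v w}"
    using assms(1) unfolding comp_minus_def is_component_def reachable_def by blast
  then have vu: "reachable (V - {x}) {e \<in> E. x \<notin> e} v u" using assms(2) by simp
  show ?thesis
  proof
    assume "w \<in> C"
    then show "reachable (V - {x}) {e \<in> E. x \<notin> e} u w"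
      using C reachable_trans[OF reachable_sym[OF vu]] by simp
  next
    assume "reachable (V - {x}) {e \<in> E. x \<notin> e} u w"
    then show "w \<in> C" using C reachable_trans[OF vu] by simp
  qed
qed

lemma comp_minus_subset:
  assumes "comp_minus V E x C" "u \<in> C"
  shows "u \<in> V" "u \<noteq> x"
proof -
  have "reachable (V - {x}) {e \<in> E. x \<notin> e} u u"
    by (rule iffD1[OF comp_minus_iff_reachable[OF assms] assms(2)])
  from reachable_in[OF this] show "u \<in> V" "u \<noteq> x" by auto
qed

lemma comp_minus_closed:
  assumes C: "comp_minus V E x C" and "u \<in> C" "{u, w} \<in> E" "w \<noteq> x"
  shows "w \<in> C"
proof -
  have "u \<in> V" "u \<noteq> x" "w \<in> V" using comp_minus_subset[OF C] edge_endpoints assms by auto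
  then have "reachable (V - {x}) {e \<in> E. x \<notin> e} u w"
    using assms(3,4) by (intro reachable_edge) auto
  then show ?thesis by (rule iffD2[OF comp_minus_iff_reachable[OF C assms(2)]])
qed

lemma comp_minus_disjoint:
  assumes "comp_minus V E x C1" "comp_minus V E x C2" "C1 \<noteq> C2"
  shows "C1 \<inter> C2 = {}"
proof (rule ccontr)
  assume "C1 \<inter> C2 \<noteq> {}"
  then obtain u where "u \<in> C1" "u \<in> C2" by blast
  have "w \<in> C1 \<longleftrightarrow> w \<in> C2" for w
    using comp_minus_iff_reachable[OF assms(1) \<open>u \<in> C1\<close>, of w]
      comp_minus_iff_reachable[OF assms(2) \<open>u \<in> C2\<close>, of w]
    by simp
  then show False using assms(3) by blast
qed

lemma walk_in_comp_minus:
  assumes C: "comp_minus V E x C"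
  shows "is_walk V E P \<Longrightarrow> hd P \<in> C \<Longrightarrow> x \<notin> set P \<Longrightarrow> set P \<subseteq> C"
proof (induction P rule: induct_list012)
  case (3 a c P)
  then have "c \<in> C" using comp_minus_closed[OF C, of a c] by auto
  then show ?case using 3 by auto
qed auto

lemma d_through_root:
  assumes C: "comp_minus V E x C" and "u \<in> C" "v \<in> V" "v \<notin> C"
  shows "d u v = d u x + d x v"
proof -
  have "u \<in> V" using comp_minus_subset(1)[OF assms(1,2)] .
  then obtain P where P: "is_walk V E P" "hd P = u" "last P = v" "length P = Suc (d u v)"
    using shortest_walk_exists[OF reachable[OF _ assms(3)]] by blast
  have "x \<in> set P"
  proof (rule ccontr)
    assume "x \<notin> set P"
    then have "set P \<subseteq> C" using walk_in_comp_minus[OF C P(1)] P(2) assms(2) by simp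
    moreover have "v \<in> set P" using P(1,3) is_walk_Nil last_in_set by metis
    ultimately show False using assms(4) by blast
  qed
  then obtain i where i: "i < length P" "P ! i = x" by (metis in_set_conv_nth)
  have "d u v \<le> d u x + d x v" using d_triangle \<open>u \<in> V\<close> root_in_V assms(3) by blast
  moreover have "d u x \<le> i" "d x v \<le> d u v - i"
    using gdist_le_walk_prefix[OF P(1) i(1)] gdist_le_walk_suffix[OF P(1) i(1)] P i by simp_all
  ultimately show ?thesis using P(4) i(1) by linarith
qed

lemma comp_minus_of_pendant:
  assumes C: "comp_minus V E x C" and "l \<in> C" "is_leaf V E l" "{l, x} \<in> E"
  shows "C = {l}"
proof -
  have no_edge: "{l, c} \<notin> {e \<in> E. x \<notin> e}" for c
    using leaf_neighbour_unique[OF assms(3), of c x] assms(4) by (auto simp: insert_commute)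
  have "w = l" if w: "w \<in> C" for w
  proof -
    obtain xs where xs: "is_walk (V - {x}) {e \<in> E. x \<notin> e} xs" "hd xs = l" "last xs = w"
      using iffD1[OF comp_minus_iff_reachable[OF C assms(2)] w] unfolding reachable_def by blast
    show ?thesis
    proof (cases xs)
      case (Cons a ys)
      then show ?thesis using xs no_edge by (cases ys) auto
    qed (use xs in simp)
  qed
  then show ?thesis using assms(2) by blast
qed

end

section \<open>Broom-shaped components\<close>

lemma double_sum_lessThan_diff: "2 * (\<Sum>j<n. n - j) = n * (n + 1)" for n :: nat
proof (induction n)
  case (Suc n)
  have "(\<Sum>j<n. Suc n - j) = (\<Sum>j<n. n - j) + n" by (simp add: Suc_diff_le sum_Suc)
  then show ?case using Suc by simp
qed simp

lemma double_sum_lessThan: "2 * (\<Sum>j<n. j) + n = n * n" for n :: nat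
  by (induction n) auto

lemma double_sum_lessThan_Suc: "2 * (\<Sum>j<n. j + 1) = n * (n + 1)" for n :: nat
  by (induction n) auto

lemma triple_sum_lessThan_absdiff: "3 * (\<Sum>i<n. \<Sum>j<n. max i j - min i j) + n = n ^ 3" for n :: nat
proof (induction n)
  case (Suc n)
  have "(\<Sum>i<Suc n. \<Sum>j<Suc n. f i j) =
      (\<Sum>i<n. \<Sum>j<n. f i j) + (\<Sum>i<n. f i n) + (\<Sum>j<n. f n j) + f n n" for f :: "nat \<Rightarrow> nat \<Rightarrow> nat"
    by (simp add: sum.distrib)
  moreover have "(\<Sum>i<n. max i n - min i n) = (\<Sum>i<n. n - i)" "(\<Sum>j<n. max n j - min n j) = (\<Sum>j<n. n - j)"
    by (auto intro!: sum.cong)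
  ultimately have "(\<Sum>i<Suc n. \<Sum>j<Suc n. max i j - min i j) =
      (\<Sum>i<n. \<Sum>j<n. max i j - min i j) + 2 * (\<Sum>j<n. n - j)"
    by (simp only:)
  then show ?case
    using Suc double_sum_lessThan_diff[of n] by (simp add: power3_eq_cube algebra_simps)
qed simp

locale broom_component = rooted_tree +
  fixes C b y
  assumes component: "comp_minus V E x C"
    and one_broom: "card {b \<in> C. is_broom V E b} = 1"
    and y_in_C: "y \<in> C" and y_leaf: "is_leaf V E y" and y_b: "{y, b} \<in> E"
    and root_not_leaf: "\<not> is_leaf V E x"
begin

lemma C_subset: "C \<subseteq> V" "x \<notin> C"
  using comp_minus_subset[OF component] by auto

lemma finite_C: "finite C"
  using C_subset finite_V finite_subset by blast

lemma broom_neq_root: "b \<noteq> x"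
proof
  assume "b = x"
  then have "C = {y}" using comp_minus_of_pendant[OF component y_in_C y_leaf] y_b by simp
  moreover have "{b' \<in> C. is_broom V E b'} \<noteq> {}" using one_broom by (metis card.empty zero_neq_one)
  ultimately obtain z where "is_leaf V E z" "{y, z} \<in> E" unfolding is_broom_def by blast
  then have "z = x" using leaf_neighbour_unique[OF y_leaf, of z x] y_b \<open>b = x\<close> by (simp add: insert_commute)
  then show False using \<open>is_leaf V E z\<close> root_not_leaf by simp
qed

lemma broom_in_C: "b \<in> C"
  using comp_minus_closed[OF component y_in_C y_b broom_neq_root] .

lemma broom_vertices_in_C: "{b' \<in> C. is_broom V E b'} = {b}"
proof -
  have "is_broom V E b"
    unfolding is_broom_def using broom_in_C C_subset y_leaf y_b by (auto simp: insert_commute)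
  then have "b \<in> {b' \<in> C. is_broom V E b'}" using broom_in_C by simp
  then show ?thesis using one_broom by (metis card_1_singletonE singletonD)
qed

lemma leaf_in_C:
  assumes "l \<in> C" "is_leaf V E l"
  shows "parent l = b" "{b, l} \<in> E" "d x l = d x b + 1"
proof -
  have lV: "l \<in> V" "l \<noteq> x" using assms C_subset by auto
  note p = parent[OF lV]
  have "parent l \<noteq> x"
  proof
    assume "parent l = x"
    then have "C = {l}" using comp_minus_of_pendant[OF component assms] p by (simp add: insert_commute)
    then have "b = x"
      using leaf_neighbour_unique[OF y_leaf, of b x] y_in_C y_b p \<open>parent l = x\<close> by (simp add: insert_commute)
    then show False using broom_neq_root by simp
  qed
  then have "parent l \<in> C" using comp_minus_closed[OF component assms(1)] p by (simp add: insert_commute)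
  moreover have "is_broom V E (parent l)" unfolding is_broom_def using p assms(2) by blast
  ultimately show "parent l = b" using broom_vertices_in_C by blast
  then show "{b, l} \<in> E" "d x l = d x b + 1" using p by simp_all
qed


definition q where "q = d x b"

lemma broom_in_V: "b \<in> V"
  using broom_in_C C_subset by auto

lemma q_pos: "q \<ge> 1"
  using d_root_eq_0_iff[OF broom_in_V] broom_neq_root unfolding q_def by simp

lemma d_root_y: "d x y = q + 1"
  using leaf_in_C(3)[OF y_in_C y_leaf] unfolding q_def .

text \<open>A deepest descendant of \<open>u\<close> is a leaf of \<open>C\<close>, hence a neighbour of \<open>b\<close>.\<close>

lemma non_leaf_on_stem:
  assumes u: "u \<in> C" "\<not> is_leaf V E u"
  shows "d x b = d x u + d u b"
proof -
  have uV: "u \<in> V" "u \<noteq> x" using u C_subset by auto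
  define D where "D = {w \<in> V. d x w = d x u + d u w}"
  have "finite D" unfolding D_def using finite_V by simp
  moreover have "u \<in> D" unfolding D_def using uV gdist_self[of u V E] by simp
  ultimately have "Max (d x ` D) \<in> d x ` D" by (intro Max_in) auto
  moreover have "d x w' \<le> Max (d x ` D)" if "w' \<in> D" for w' using \<open>finite D\<close> that by simp
  ultimately obtain w where wD: "w \<in> D" and w_max: "\<And>w'. w' \<in> D \<Longrightarrow> d x w' \<le> d x w"
    by (metis imageE)
  have wV: "w \<in> V" "d x w = d x u + d u w" using wD D_def by auto
  obtain c where c: "{c, u} \<in> E" "d x c = d x u + 1"
    using leafI_childless[OF uV] u(2) by blast
  then have "c \<in> D" unfolding D_def using d_edge[of c u] edge_endpoints[of c u] by (simp add: gdist_commute)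
  then have deeper: "d x u < d x w" using w_max[of c] c(2) by simp
  then have "w \<noteq> x" using gdist_self[OF root_in_V] by auto
  have w_leaf: "is_leaf V E w"
  proof (rule leafI_childless[OF wV(1) \<open>w \<noteq> x\<close>])
    fix z assume z: "{z, w} \<in> E"
    have zV: "z \<in> V" using edge_endpoints z by auto
    have "d x z \<le> d x u + d u z" "d u z \<le> d u w + d w z" "d w z = 1"
      using d_triangle[OF root_in_V uV(1) zV] d_triangle[OF uV(1) wV(1) zV] d_edge[of w z] z
      by (simp_all add: insert_commute)
    then have "d x z = d x w + 1 \<Longrightarrow> z \<in> D" unfolding D_def using zV wV by simp
    then show "d x z \<noteq> d x w + 1" using w_max[of z] by fastforce
  qed
  have "w \<in> C"
  proof (rule ccontr)
    assume "w \<notin> C"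
    then have "d u x = 0" using d_through_root[OF component u(1) wV(1)] wV by simp
    then show False using d_eq_0_iff uV root_in_V by blast
  qed
  note w_in_C = leaf_in_C[OF this w_leaf]
  obtain z where z: "{z, w} \<in> E" "d u z + 1 = d u w"
    using gdist_last_edge[OF reachable[OF uV(1) wV(1)]] deeper by (metis less_irrefl)
  have "z = b" using leaf_neighbour_unique[OF w_leaf z(1)] w_in_C(2) by (simp add: insert_commute)
  then show ?thesis using z w_in_C wV by simp
qed

lemma stem_vertex:
  assumes "j < q"
  shows "ancestor j b \<in> C" "\<not> is_leaf V E (ancestor j b)" "d x (ancestor j b) + j = q"
    "d (ancestor j b) b = j"
proof -
  define v where "v = ancestor j b"
  have v: "v \<in> V" "d x v + j = q" "d v b \<le> j"
    using ancestor[OF broom_in_V, of j] assms unfolding q_def v_def by auto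
  have "d x b \<le> d x v + d v b" using d_triangle root_in_V v broom_in_V by blast
  then show dvb: "d v b = j" using v unfolding q_def by simp
  have "v \<noteq> x" using v assms d_root_eq_0_iff by fastforce
  show "v \<in> C"
  proof (rule ccontr)
    assume "v \<notin> C"
    then have "d b v = d b x + d x v" using d_through_root[OF component broom_in_C v(1)] by simp
    then show False using v dvb assms gdist_commute[of V E b] unfolding q_def by simp
  qed
  obtain c where c: "{c, v} \<in> E" "d x c = d x v + 1"
  proof (cases j)
    case 0
    then show ?thesis using that[of y] y_b d_root_y v unfolding v_def ancestor_def by simp
  next
    case (Suc i)
    define a where "a = ancestor i b"
    have a: "a \<in> V" "d x a + i = q"
      using ancestor[OF broom_in_V, of i] assms Suc unfolding q_def a_def by auto
    then have "a \<noteq> x" using Suc assms d_root_eq_0_iff by fastforce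
    moreover have "parent a = v" unfolding v_def a_def ancestor_def Suc by simp
    ultimately have "{v, a} \<in> E" using parent(1)[OF a(1)] by simp
    then show ?thesis using that[of a] a(2) v(2) Suc by (simp add: insert_commute)
  qed
  show "\<not> is_leaf V E v"
  proof
    assume "is_leaf V E v"
    then have "c = parent v"
      using leaf_neighbour_unique c(1) parent(1)[OF v(1) \<open>v \<noteq> x\<close>] by blast
    then show False using c parent(2)[OF v(1) \<open>v \<noteq> x\<close>] by simp
  qed
  show "d x v + j = q" by (rule v(2))
qed

definition stem where "stem = {u \<in> C. \<not> is_leaf V E u}"
definition leaves where "leaves = {u \<in> C. is_leaf V E u}"
definition t where "t = card leaves"

lemma stem_eq: "stem = (\<lambda>j. ancestor j b) ` {..<q}"
proof (intro set_eqI iffI)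
  fix u assume "u \<in> stem"
  then have u: "u \<in> C" "\<not> is_leaf V E u" unfolding stem_def by auto
  then have "u \<in> V" "u \<noteq> x" using C_subset by auto
  moreover have e: "d x b = d x u + d u b" using non_leaf_on_stem u by blast
  ultimately have "u = ancestor (d u b) b" "d u b < q"
    using ancestor_eqI[OF _ broom_in_V] d_root_eq_0_iff unfolding q_def by auto
  then show "u \<in> (\<lambda>j. ancestor j b) ` {..<q}" by blast
qed (auto simp: stem_def stem_vertex)

lemma inj_on_stem: "inj_on (\<lambda>j. ancestor j b) {..<q}"
  by (rule inj_onI) (metis lessThan_iff stem_vertex(3) add_left_cancel)

lemma C_eq: "C = stem \<union> leaves" "stem \<inter> leaves = {}"
  unfolding stem_def leaves_def by auto

lemma finite_leaves: "finite leaves"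
  using finite_C unfolding leaves_def by simp

lemma card_C: "card C = q + t"
  using card_image[OF inj_on_stem] card_Un_disjoint[of stem leaves] finite_leaves C_eq
  unfolding t_def stem_eq by simp

lemma sum_C: "sum f C = (\<Sum>j<q. f (ancestor j b)) + sum f leaves"
  using sum.union_disjoint[of stem leaves f] sum.reindex[OF inj_on_stem, of f] finite_leaves C_eq
  unfolding stem_eq by simp

lemma sum_leaves_const: "(\<And>l. l \<in> leaves \<Longrightarrow> f l = c) \<Longrightarrow> sum f leaves = t * c"
  unfolding t_def by simp

lemma d_stem:
  assumes "i < q" "j < q"
  shows "d (ancestor i b) (ancestor j b) = max i j - min i j"
proof -
  have "d (ancestor i b) (ancestor j b) = j - i" if "i \<le> j" "j < q" for i j
  proof -
    have iV: "ancestor i b \<in> V" "d x (ancestor i b) + i = q"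
      using stem_vertex[of i] C_subset that by auto
    have jV: "ancestor j b \<in> V" "d x (ancestor j b) + j = q"
      using stem_vertex[of j] C_subset that by auto
    have "ancestor j b = ancestor (j - i) (ancestor i b)" using ancestor_add[of "j - i" i b] that by simp
    then have "d (ancestor j b) (ancestor i b) \<le> j - i"
      using ancestor(3)[OF iV(1), of "j - i"] iV that by simp
    moreover have "d x (ancestor i b) \<le> d x (ancestor j b) + d (ancestor j b) (ancestor i b)"
      using d_triangle root_in_V iV jV by blast
    ultimately show ?thesis using iV jV gdist_commute[of V E "ancestor i b"] by simp
  qed
  then show ?thesis
    using assms gdist_commute[of V E "ancestor i b" "ancestor j b"] by (cases "i \<le> j") auto
qed

lemma leaf_facts:
  assumes "l \<in> leaves"
  shows "{l, b} \<in> E" "\<And>w. {l, w} \<in> E \<Longrightarrow> w = b" "l \<in> V" "d x l = q + 1"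
proof -
  have l: "l \<in> C" "is_leaf V E l" using assms leaves_def by auto
  show e: "{l, b} \<in> E" using leaf_in_C(2)[OF l] by (simp add: insert_commute)
  show "\<And>w. {l, w} \<in> E \<Longrightarrow> w = b" using leaf_neighbour_unique[OF l(2)] e by (metis insert_commute)
  show "l \<in> V" using l C_subset by auto
  show "d x l = q + 1" using leaf_in_C(3)[OF l] q_def by simp
qed

lemma d_leaf:
  assumes "l \<in> leaves" "v \<in> V" "v \<noteq> l"
  shows "d l v = d b v + 1"
  using gdist_pendant[OF leaf_facts(1,2)[OF assms(1)] reachable[OF leaf_facts(3)[OF assms(1)] assms(2)]]
    assms(3) by blast

lemma d_leaf_stem:
  assumes "l \<in> leaves" "j < q"
  shows "d (ancestor j b) l = j + 1"
proof -
  have "ancestor j b \<in> C" "ancestor j b \<notin> leaves" "d (ancestor j b) b = j"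
    using stem_vertex assms unfolding leaves_def by auto
  then have "d l (ancestor j b) = j + 1"
    using d_leaf[OF assms(1), of "ancestor j b"] C_subset assms(1) gdist_commute[of V E b] by auto
  then show ?thesis using gdist_commute by metis
qed

lemma d_leaf_leaf:
  assumes "l \<in> leaves" "l' \<in> leaves" "l \<noteq> l'"
  shows "d l l' = 2"
proof -
  have "b \<notin> leaves" using stem_vertex(2)[of 0] q_pos unfolding leaves_def ancestor_def by simp
  then have "b \<noteq> l'" using assms(2) by blast
  then have "d l' b = 1" using d_leaf[OF assms(2) broom_in_V] gdist_self[OF broom_in_V, of E] by simp
  then show ?thesis
    using d_leaf[OF assms(1) leaf_facts(3)[OF assms(2)]] assms(3) gdist_commute[of V E b] by simp
qed

lemma sum_d_root: "2 * (\<Sum>v\<in>C. d x v) = q * (q + 1) + 2 * t * (q + 1)"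
proof -
  have "(\<Sum>j<q. d x (ancestor j b)) = (\<Sum>j<q. q - j)"
    using stem_vertex(3) by (intro sum.cong refl) (metis add_diff_cancel_right' lessThan_iff)
  moreover have "(\<Sum>v\<in>leaves. d x v) = t * (q + 1)"
    using leaf_facts(4) by (rule sum_leaves_const)
  ultimately show ?thesis using sum_C[of "d x"] double_sum_lessThan_diff[of q] by simp
qed

lemma sum_d_broom: "2 * (\<Sum>v\<in>C. d v b) + q = q * q + 2 * t"
proof -
  have "(\<Sum>j<q. d (ancestor j b) b) = (\<Sum>j<q. j)"
    using stem_vertex(4) by simp
  moreover have "(\<Sum>v\<in>leaves. d v b) = t * 1"
    using leaf_facts(1) d_edge by (intro sum_leaves_const) simp
  ultimately show ?thesis using sum_C[of "\<lambda>v. d v b"] double_sum_lessThan[of q] by simp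
qed

lemma sum_d_from_stem:
  assumes "i < q"
  shows "(\<Sum>v\<in>C. d (ancestor i b) v) = (\<Sum>j<q. max i j - min i j) + t * (i + 1)"
proof -
  have "(\<Sum>j<q. d (ancestor i b) (ancestor j b)) = (\<Sum>j<q. max i j - min i j)"
    using d_stem assms by simp
  moreover have "(\<Sum>v\<in>leaves. d (ancestor i b) v) = t * (i + 1)"
    using d_leaf_stem assms by (intro sum_leaves_const) simp
  ultimately show ?thesis using sum_C[of "d (ancestor i b)"] by simp
qed

lemma sum_d_from_leaf:
  assumes l: "l \<in> leaves"
  shows "(\<Sum>v\<in>C. d l v) + 2 = (\<Sum>j<q. j + 1) + 2 * t"
proof -
  have "(\<Sum>j<q. d l (ancestor j b)) = (\<Sum>j<q. j + 1)"
    using d_leaf_stem[OF l] gdist_commute[of V E l] by simp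
  moreover have "(\<Sum>v\<in>leaves. d l v) = (\<Sum>v\<in>leaves - {l}. d l v) + d l l"
    using l finite_leaves by (simp add: sum.remove)
  moreover have "(\<Sum>v\<in>leaves - {l}. d l v) = (\<Sum>v\<in>leaves - {l}. 2)"
    using d_leaf_leaf[OF l] by (intro sum.cong) auto
  moreover have "d l l = 0" using gdist_self[OF leaf_facts(3)[OF l]] .
  moreover have "card (leaves - {l}) + 1 = t"
    using l finite_leaves card_Diff_singleton[OF l] card_gt_0_iff[of leaves] unfolding t_def by auto
  ultimately show ?thesis using sum_C[of "d l"] by (simp add: algebra_simps)
qed

lemma sum_sum_d:
  "3 * (\<Sum>u\<in>C. \<Sum>v\<in>C. d u v) + q + 6 * t = q ^ 3 + 3 * (t * q * (q + 1)) + 6 * (t * t)"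
proof -
  define A where "A = (\<Sum>i<q. \<Sum>j<q. max i j - min i j)"
  define S where "S = (\<Sum>j<q. j + 1)"
  have stem_rows: "(\<Sum>i<q. \<Sum>v\<in>C. d (ancestor i b) v) = A + t * S"
    using sum_d_from_stem unfolding A_def S_def by (simp add: sum.distrib sum_distrib_left)
  have "(\<Sum>l\<in>leaves. (\<Sum>v\<in>C. d l v) + 2) = t * (S + 2 * t)"
    unfolding S_def by (rule sum_leaves_const[of "\<lambda>l. (\<Sum>v\<in>C. d l v) + 2", OF sum_d_from_leaf])
  then have leaf_rows: "(\<Sum>l\<in>leaves. \<Sum>v\<in>C. d l v) + 2 * t = t * S + 2 * (t * t)"
    unfolding sum.distrib by (simp add: t_def distrib_left)
  have "3 * A + q = q ^ 3"
    using triple_sum_lessThan_absdiff[of q] unfolding A_def .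
  moreover have "2 * (t * S) = t * q * (q + 1)"
    using double_sum_lessThan_Suc[of q] unfolding S_def by (metis mult.assoc mult.left_commute)
  ultimately show ?thesis
    using sum_C[of "\<lambda>u. \<Sum>v\<in>C. d u v"] stem_rows leaf_rows by linarith
qed

end

section \<open>Moving \<open>T2\<close> to \<open>y1'\<close>\<close>

lemma even_sum_sum_symmetric:
  fixes f :: "'a \<Rightarrow> 'a \<Rightarrow> nat"
  assumes "finite S" "\<And>u v. f u v = f v u" "\<And>u. u \<in> S \<Longrightarrow> f u u = 0"
  shows "even (\<Sum>u\<in>S. \<Sum>v\<in>S. f u v)"
  using assms(1,3)
proof (induction S rule: finite_induct)
  case (insert a S)
  have "(\<Sum>u\<in>insert a S. \<Sum>v\<in>insert a S. f u v) =
      (\<Sum>u\<in>S. \<Sum>v\<in>S. f u v) + (\<Sum>u\<in>S. f u a) + (\<Sum>v\<in>S. f a v) + f a a"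
    using insert.hyps by (simp add: sum.distrib)
  moreover have "(\<Sum>u\<in>S. f u a) = (\<Sum>v\<in>S. f a v)"
    by (intro sum.cong refl) (rule assms(2))
  ultimately show ?case using insert by simp
qed simp

lemma div_2_le_div_2_iff: "even a \<Longrightarrow> even b \<Longrightarrow> a div 2 \<le> b div 2 \<longleftrightarrow> a \<le> b" for a b :: nat
  by (elim evenE) simp

locale moved_branch = rooted_tree +
  fixes T1 T2 L :: "'a set" and y1 y2 y1' :: 'a
  assumes special: "special_pair V E x T1 T2"
    and root_not_leaf: "\<not> is_leaf V E x"
    and y1: "y1 \<in> T1" "is_leaf V E y1" and y2: "y2 \<in> T2" "is_leaf V E y2"
    and y1_y1': "{y1, y1'} \<in> E"
    and same_depth: "d x y1 = d x y2"
    and finite_L: "finite L" and L_fresh: "L \<inter> (V - T2) = {}" and card_L: "card L = card T2"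
    and same_leaf_count: "card {y \<in> T1. is_leaf V E y} = card {y \<in> T2. is_leaf V E y}"
begin

lemma T1_T2: "T1 \<noteq> T2" "comp_minus V E x T1" "comp_minus V E x T2"
  "card {b \<in> T1. is_broom V E b} = 1" "card {b \<in> T2. is_broom V E b} = 1"
  using special unfolding special_pair_def by auto

sublocale B1: broom_component V E x T1 y1' y1
  by unfold_locales (use T1_T2 y1 y1_y1' root_not_leaf in auto)

sublocale B2: broom_component V E x T2 "parent y2" y2
proof -
  have "y2 \<in> V" "y2 \<noteq> x" using comp_minus_subset[OF T1_T2(3) y2(1)] by auto
  then show "broom_component V E x T2 (parent y2) y2"
    using T1_T2 y2 root_not_leaf parent(1) by unfold_locales (auto simp: insert_commute)
qed

definition A where "A = V - T2"
definition R where "R = A - T1"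
definition V' where "V' = move_verts V T2 L"
definition E' where "E' = move_edges E T2 y1' L"
definition m where "m = B1.q + B1.t"
abbreviation d' where "d' \<equiv> gdist V' E'"

lemma T1_T2_disjoint: "T1 \<inter> T2 = {}"
  using comp_minus_disjoint T1_T2 by blast

lemma V'_eq: "V' = A \<union> L"
  unfolding V'_def move_verts_def A_def by simp

lemma A_L_disjoint: "A \<inter> L = {}"
  using L_fresh unfolding A_def by blast

lemma E'_iff: "e \<in> E' \<longleftrightarrow> (e \<in> E \<and> e \<inter> T2 = {}) \<or> (\<exists>l\<in>L. e = {y1', l})"
  unfolding E'_def move_edges_def by blast

lemma finite_A: "finite A"
  unfolding A_def using finite_V by simp

lemma A_subset: "A \<subseteq> V" "T1 \<subseteq> A" "x \<in> A" "y1' \<in> A"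
  using B1.C_subset B2.C_subset T1_T2_disjoint root_in_V B1.broom_in_C unfolding A_def by auto

lemma same_q: "B2.q = B1.q"
  using B1.d_root_y B2.d_root_y same_depth by simp

lemma same_t: "B2.t = B1.t"
  unfolding B1.t_def B2.t_def B1.leaves_def B2.leaves_def using same_leaf_count by simp

lemma card_T1_T2: "card T1 = m" "card T2 = m"
  using B1.card_C B2.card_C same_q same_t unfolding m_def by auto

text \<open>Distances inside \<open>A\<close> do not change: contracting \<open>T2\<close> onto \<open>x\<close> maps walks of \<open>T\<close> to walks of
  \<open>T'\<close>, and contracting \<open>L\<close> onto \<open>y1'\<close> maps walks of \<open>T'\<close> back to walks of \<open>T\<close>.\<close>

lemma d'_eq_d:
  assumes "u \<in> A" "v \<in> A"
  shows "reachable V' E' u v" "d' u v = d u v"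
proof -
  define g where "g w = (if w \<in> T2 then x else w)" for w
  have "g a \<in> V'" if "a \<in> V" for a
    using that A_subset unfolding g_def V'_eq A_def by auto
  moreover have "g a = g c \<or> {g a, g c} \<in> E'" if e: "{a, c} \<in> E" for a c
  proof -
    have "a \<in> T2 \<Longrightarrow> c \<notin> T2 \<Longrightarrow> c = x" "c \<in> T2 \<Longrightarrow> a \<notin> T2 \<Longrightarrow> a = x"
      using comp_minus_closed[OF T1_T2(3), of a c] comp_minus_closed[OF T1_T2(3), of c a] e
      by (auto simp: insert_commute)
    then show ?thesis using e B2.C_subset(2) unfolding g_def E'_iff by auto
  qed
  ultimately have "reachable V' E' (g u) (g v) \<and> d' (g u) (g v) \<le> d u v"
    using gdist_image_le[of V E u v g V' E'] reachable assms A_subset by blast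
  moreover have "g u = u" "g v = v" using assms unfolding g_def A_def by auto
  ultimately have reach: "reachable V' E' u v" and le: "d' u v \<le> d u v" by auto
  then show "reachable V' E' u v" by simp
  define h where "h w = (if w \<in> L then y1' else w)" for w
  have "h a \<in> V" if "a \<in> V'" for a
    using that A_subset unfolding h_def V'_eq by auto
  moreover have "h a = h c \<or> {h a, h c} \<in> E" if e: "{a, c} \<in> E'" for a c
  proof (cases "{a, c} \<in> E \<and> {a, c} \<inter> T2 = {}")
    case True
    then have "a \<in> A" "c \<in> A" using edge_endpoints unfolding A_def by auto
    then show ?thesis using True A_L_disjoint unfolding h_def by auto
  next
    case False
    then obtain l where "l \<in> L" "{a, c} = {y1', l}" using e unfolding E'_iff by blast
    then show ?thesis using A_subset(4) A_L_disjoint unfolding h_def by (auto simp: doubleton_eq_iff)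
  qed
  ultimately have "d (h u) (h v) \<le> d' u v"
    using gdist_image_le[of V' E' u v h V E] reach by blast
  moreover have "h u = u" "h v = v" using assms A_L_disjoint unfolding h_def by auto
  ultimately show "d' u v = d u v" using le by simp
qed

lemma new_leaf_edge: "l \<in> L \<Longrightarrow> {l, y1'} \<in> E'"
  unfolding E'_iff by (auto simp: insert_commute)

lemma new_leaf_neighbour:
  assumes "l \<in> L" "{l, w} \<in> E'"
  shows "w = y1'"
proof -
  have "l \<notin> A" "y1' \<noteq> l" using assms(1) A_L_disjoint A_subset(4) by auto
  then have "\<not> ({l, w} \<in> E \<and> {l, w} \<inter> T2 = {})" using edge_endpoints unfolding A_def by auto
  then show ?thesis using assms \<open>y1' \<noteq> l\<close> unfolding E'_iff by (auto simp: doubleton_eq_iff)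
qed

lemma d'_new_old:
  assumes "l \<in> L" "u \<in> A"
  shows "d' l u = d u y1' + 1"
proof -
  have in_V': "l \<in> V'" "y1' \<in> V'" using assms A_subset(4) V'_eq by auto
  have "reachable V' E' l u"
    using reachable_trans[OF reachable_edge[OF new_leaf_edge[OF assms(1)] in_V'] d'_eq_d(1)[OF A_subset(4) assms(2)]] .
  moreover have "u \<noteq> l" using assms A_L_disjoint by auto
  ultimately have "d' l u = d' y1' u + 1"
    using gdist_pendant[OF new_leaf_edge[OF assms(1)] new_leaf_neighbour[OF assms(1)]] by blast
  then show ?thesis using d'_eq_d(2)[OF A_subset(4) assms(2)] gdist_commute[of V E u] by simp
qed

lemma d'_new_new:
  assumes "l \<in> L" "l' \<in> L" "l \<noteq> l'"
  shows "d' l l' = 2"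
proof -
  have in_V': "l \<in> V'" "l' \<in> V'" "y1' \<in> V'" using assms A_subset(4) V'_eq by auto
  have reach: "reachable V' E' l y1'" "reachable V' E' l' y1'"
    using reachable_edge[OF new_leaf_edge[OF assms(1)] in_V'(1,3)]
      reachable_edge[OF new_leaf_edge[OF assms(2)] in_V'(2,3)] .
  have "reachable V' E' l l'" by (rule reachable_trans[OF reach(1) reachable_sym[OF reach(2)]])
  then have "d' l l' = d' y1' l' + 1"
    using gdist_pendant[OF new_leaf_edge[OF assms(1)] new_leaf_neighbour[OF assms(1)]] assms(3) by blast
  moreover have "d' l' y1' = d' y1' y1' + 1"
    using gdist_pendant[OF new_leaf_edge[OF assms(2)] new_leaf_neighbour[OF assms(2)] reach(2)]
      assms(2) A_L_disjoint A_subset(4) by auto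
  ultimately show ?thesis using gdist_self[OF in_V'(3)] gdist_commute[of V' E' l'] by simp
qed

lemma card_L_eq: "card L = m"
  using card_L card_T1_T2 by simp

lemma sum_V': "sum f V' = sum f A + sum f L"
  unfolding V'_eq by (rule sum.union_disjoint[OF finite_A finite_L A_L_disjoint])

lemma sum_V: "sum f V = sum f A + sum f T2"
  using sum.subset_diff[of T2 V f] B2.C_subset finite_V unfolding A_def by simp

lemma sum_sum_d'_eq:
  "(\<Sum>u\<in>V'. \<Sum>v\<in>V'. d' u v) + 2 * m =
     (\<Sum>u\<in>A. \<Sum>v\<in>A. d u v) + 2 * m * ((\<Sum>u\<in>A. d u y1') + card A) + 2 * m * m"
proof -
  have row_A: "(\<Sum>v\<in>V'. d' u v) = (\<Sum>v\<in>A. d u v) + m * (d u y1' + 1)" if u: "u \<in> A" for u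
  proof -
    have "(\<Sum>v\<in>A. d' u v) = (\<Sum>v\<in>A. d u v)" using d'_eq_d(2) u by simp
    moreover have "(\<Sum>v\<in>L. d' u v) = (\<Sum>v\<in>L. d u y1' + 1)"
      using d'_new_old u gdist_commute[of V' E' u] by (intro sum.cong) auto
    ultimately show ?thesis using sum_V'[of "d' u"] card_L_eq by simp
  qed
  have row_L: "(\<Sum>v\<in>V'. d' l v) + 2 = (\<Sum>v\<in>A. d v y1') + card A + 2 * m" if l: "l \<in> L" for l
  proof -
    have "(\<Sum>v\<in>A. d' l v) = (\<Sum>v\<in>A. d v y1') + card A"
      using d'_new_old l by (simp add: sum_Suc)
    moreover have "(\<Sum>v\<in>L. d' l v) = (\<Sum>v\<in>L - {l}. d' l v) + d' l l"
      using l finite_L by (simp add: sum.remove)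
    moreover have "(\<Sum>v\<in>L - {l}. d' l v) = (\<Sum>v\<in>L - {l}. 2)"
      using d'_new_new l by (intro sum.cong) auto
    moreover have "d' l l = 0" using gdist_self[of l V' E'] V'_eq l by simp
    moreover have "card (L - {l}) + 1 = m"
      using l finite_L card_L_eq card_Diff_singleton[OF l] card_gt_0_iff[of L] by auto
    ultimately show ?thesis using sum_V'[of "d' l"] by (simp add: algebra_simps)
  qed
  have "(\<Sum>u\<in>A. \<Sum>v\<in>V'. d' u v) = (\<Sum>u\<in>A. \<Sum>v\<in>A. d u v) + m * ((\<Sum>u\<in>A. d u y1') + card A)"
    using row_A by (simp add: sum.distrib sum_distrib_left algebra_simps)
  moreover have "(\<Sum>l\<in>L. (\<Sum>v\<in>V'. d' l v) + 2) = m * ((\<Sum>v\<in>A. d v y1') + card A + 2 * m)"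
    using row_L card_L_eq by simp
  then have "(\<Sum>l\<in>L. \<Sum>v\<in>V'. d' l v) + 2 * m = m * ((\<Sum>v\<in>A. d v y1') + card A) + 2 * m * m"
    unfolding sum.distrib using card_L_eq by (simp add: algebra_simps)
  ultimately show ?thesis using sum_V'[of "\<lambda>u. \<Sum>v\<in>V'. d' u v"] by (simp add: algebra_simps)
qed

lemma sum_sum_d_eq:
  "(\<Sum>u\<in>V. \<Sum>v\<in>V. d u v) = (\<Sum>u\<in>A. \<Sum>v\<in>A. d u v) +
     2 * (card A * (\<Sum>v\<in>T2. d x v) + m * (\<Sum>u\<in>A. d x u)) + (\<Sum>u\<in>T2. \<Sum>v\<in>T2. d u v)"
proof -
  have across: "d u v = d x u + d x v" "d v u = d x u + d x v" if "u \<in> A" "v \<in> T2" for u v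
    using d_through_root[OF T1_T2(3) that(2)] that gdist_commute[of V E _ x] gdist_commute[of V E u]
    unfolding A_def by auto
  have row_A: "(\<Sum>v\<in>V. d u v) = (\<Sum>v\<in>A. d u v) + (m * d x u + (\<Sum>v\<in>T2. d x v))"
    if "u \<in> A" for u
  proof -
    have "(\<Sum>v\<in>T2. d u v) = (\<Sum>v\<in>T2. d x u + d x v)" using across(1) that by simp
    then show ?thesis using sum_V[of "d u"] card_T1_T2(2) by (simp add: sum.distrib)
  qed
  have row_T2: "(\<Sum>v\<in>V. d u v) = (card A * d x u + (\<Sum>v\<in>A. d x v)) + (\<Sum>v\<in>T2. d u v)"
    if "u \<in> T2" for u
  proof -
    have "(\<Sum>v\<in>A. d u v) = (\<Sum>v\<in>A. d x v + d x u)" using across(2) that by simp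
    then show ?thesis using sum_V[of "d u"] by (simp add: sum.distrib)
  qed
  have "(\<Sum>u\<in>A. \<Sum>v\<in>V. d u v) =
      (\<Sum>u\<in>A. \<Sum>v\<in>A. d u v) + (m * (\<Sum>u\<in>A. d x u) + card A * (\<Sum>v\<in>T2. d x v))"
    using row_A by (simp add: sum.distrib sum_distrib_left)
  moreover have "(\<Sum>u\<in>T2. \<Sum>v\<in>V. d u v) =
      (card A * (\<Sum>v\<in>T2. d x v) + m * (\<Sum>u\<in>A. d x u)) + (\<Sum>u\<in>T2. \<Sum>v\<in>T2. d u v)"
    using row_T2 card_T1_T2(2) by (simp add: sum.distrib sum_distrib_left)
  ultimately show ?thesis using sum_V[of "\<lambda>u. \<Sum>v\<in>V. d u v"] by (simp add: algebra_simps)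
qed

lemma sum_A_d_root: "(\<Sum>u\<in>A. d x u) = (\<Sum>v\<in>T1. d x v) + (\<Sum>u\<in>R. d x u)"
  using sum.subset_diff[OF A_subset(2) finite_A, of "d x"] unfolding R_def by simp

lemma sum_A_d_broom: "(\<Sum>u\<in>A. d u y1') = (\<Sum>v\<in>T1. d v y1') + card R * B1.q + (\<Sum>u\<in>R. d x u)"
proof -
  have "d u y1' = B1.q + d x u" if "u \<in> R" for u
  proof -
    have "u \<in> V" "u \<notin> T1" using that unfolding R_def A_def by auto
    then have "d y1' u = d y1' x + d x u" using d_through_root[OF T1_T2(2) B1.broom_in_C] by blast
    then show ?thesis using gdist_commute[of V E y1'] unfolding B1.q_def by simp
  qed
  then have "(\<Sum>u\<in>R. d u y1') = card R * B1.q + (\<Sum>u\<in>R. d x u)" by (simp add: sum.distrib)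
  then show ?thesis using sum.subset_diff[OF A_subset(2) finite_A, of "\<lambda>u. d u y1'"] unfolding R_def by simp
qed

lemma card_A_R: "card A + m = card V" "card R + m = card A"
proof -
  have "card A = card V - card T2" "card T2 \<le> card V"
    unfolding A_def using B2.C_subset finite_V by (auto simp: card_Diff_subset card_mono finite_subset)
  then show "card A + m = card V" using card_T1_T2 by simp
  have "card R = card A - card T1" "card T1 \<le> card A"
    unfolding R_def using A_subset(2) finite_A by (auto simp: card_Diff_subset card_mono finite_subset)
  then show "card R + m = card A" using card_T1_T2 by simp
qed

lemma wiener_sum_difference:
  "3 * (int (\<Sum>u\<in>V'. \<Sum>v\<in>V'. d' u v) - int (\<Sum>u\<in>V. \<Sum>v\<in>V. d u v)) =
     int B1.q * ((int B1.q + 1) * (3 * int (card V) + 2 * int B1.q - 5) - 12 * (int m)\<^sup>2)"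
proof -
  define X' X XAA X22 where "X' = (\<Sum>u\<in>V'. \<Sum>v\<in>V'. d' u v)" and "X = (\<Sum>u\<in>V. \<Sum>v\<in>V. d u v)"
    and "XAA = (\<Sum>u\<in>A. \<Sum>v\<in>A. d u v)" and "X22 = (\<Sum>u\<in>T2. \<Sum>v\<in>T2. d u v)"
  define DA DB DR where "DA = (\<Sum>u\<in>A. d x u)" and "DB = (\<Sum>u\<in>A. d u y1')" and "DR = (\<Sum>u\<in>R. d x u)"
  define S1 S2 SB where "S1 = (\<Sum>v\<in>T1. d x v)" and "S2 = (\<Sum>v\<in>T2. d x v)" and "SB = (\<Sum>v\<in>T1. d v y1')"
  define q t where "q = B1.q" and "t = B1.t"
  have nat_eqs: "X' + 2 * m = XAA + 2 * m * (DB + card A) + 2 * m * m"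
    "X = XAA + 2 * (card A * S2 + m * DA) + X22"
    "DA = S1 + DR" "DB = SB + card R * q + DR"
    "card A + m = card V" "card R + m = card A" "m = q + t"
    "2 * S1 = q * (q + 1) + 2 * t * (q + 1)" "2 * S2 = q * (q + 1) + 2 * t * (q + 1)"
    "2 * SB + q = q * q + 2 * t" "3 * X22 + q + 6 * t = q ^ 3 + 3 * (t * q * (q + 1)) + 6 * (t * t)"
    unfolding X'_def X_def XAA_def X22_def DA_def DB_def DR_def S1_def S2_def SB_def q_def t_def
    using sum_sum_d'_eq sum_sum_d_eq sum_A_d_root sum_A_d_broom card_A_R m_def B1.sum_d_root
      B1.sum_d_broom B2.sum_d_root B2.sum_sum_d same_q same_t by simp_all
  note int_eqs = nat_eqs[THEN arg_cong[where f = int],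
      unfolded of_nat_add of_nat_mult of_nat_numeral of_nat_power of_nat_1]
  show ?thesis unfolding X'_def[symmetric] X_def[symmetric] q_def[symmetric] using int_eqs by algebra
qed


lemma wiener_moved_le_iff:
  "wiener V' E' \<le> wiener V E \<longleftrightarrow>
     real (B1.q + 1) * (3 * real (card V) + 2 * real (B1.q + 1) - 7) \<le> 12 * (real B1.t + real B1.q)\<^sup>2"
proof -
  define X' X where "X' = (\<Sum>u\<in>V'. \<Sum>v\<in>V'. d' u v)" and "X = (\<Sum>u\<in>V. \<Sum>v\<in>V. d u v)"
  define K where "K = (int B1.q + 1) * (3 * int (card V) + 2 * int B1.q - 5) - 12 * (int m)\<^sup>2"
  have "finite V'" unfolding V'_eq using finite_A finite_L by simp
  then have "even X'"
    unfolding X'_def by (rule even_sum_sum_symmetric[OF _ gdist_commute gdist_self])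
  moreover have "even X"
    unfolding X_def by (rule even_sum_sum_symmetric[OF finite_V gdist_commute gdist_self])
  ultimately have "wiener V' E' \<le> wiener V E \<longleftrightarrow> X' \<le> X"
    unfolding wiener_def X'_def[symmetric] X_def[symmetric] by (rule div_2_le_div_2_iff)
  also have "\<dots> \<longleftrightarrow> 3 * (int X' - int X) \<le> 0"
    by simp
  also have "\<dots> \<longleftrightarrow> int B1.q * K \<le> 0"
    unfolding X'_def X_def wiener_sum_difference K_def ..
  also have "\<dots> \<longleftrightarrow> K \<le> 0"
    using B1.q_pos by (simp add: mult_le_0_iff)
  also have "\<dots> \<longleftrightarrow> real_of_int K \<le> 0"
    by simp
  also have "real_of_int K =
      real (B1.q + 1) * (3 * real (card V) + 2 * real (B1.q + 1) - 7) - 12 * (real B1.t + real B1.q)\<^sup>2"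
    unfolding K_def m_def by (simp add: algebra_simps)
  finally show ?thesis by simp
qed

end

lemma sqrt_le_iff_le_power2: "0 \<le> y \<Longrightarrow> sqrt x \<le> y \<longleftrightarrow> x \<le> y\<^sup>2"
  using real_le_lsqrt sqrt_le_D by blast

theorem mainTheorem6:
  fixes V :: "'a set" and E :: "'a set set" and x y1 y2 y1' :: 'a
    and T1 T2 L :: "'a set"
  assumes "max_wiener_tree V E"
    and "is_special V E x"
    and "special_pair V E x T1 T2"
    and "y1 \<in> T1" and "is_leaf V E y1"
    and "y2 \<in> T2" and "is_leaf V E y2"
    and "{y1, y1'} \<in> E"
    and "gdist V E x y1 = gdist V E x y2"
    and "finite L" and "L \<inter> (V - T2) = {}" and "card L = card T2"
    and "card {y \<in> T1. is_leaf V E y} = card {y \<in> T2. is_leaf V E y}"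
  shows "wiener (move_verts V T2 L) (move_edges E T2 y1' L) \<le> wiener V E
     \<longleftrightarrow> real (card {y \<in> T1. is_leaf V E y}) \<ge>
         sqrt (real (gdist V E x y1) * (3 * real (card V) + 2 * real (gdist V E x y1) - 7) / 12)
         - real (gdist V E x y1) + 1"
proof -
  have "is_tree V E" using assms(1) unfolding max_wiener_tree_def by blast
  moreover have "x \<in> V" "\<not> is_leaf V E x" using assms(2) unfolding is_special_def is_leaf_def by auto
  ultimately interpret moved_branch V E x T1 T2 L y1 y2 y1'
    using assms(3-) by unfold_locales
  have p: "gdist V E x y1 = B1.q + 1" by (rule B1.d_root_y)
  have t: "card {y \<in> T1. is_leaf V E y} = B1.t" unfolding B1.t_def B1.leaves_def ..
  have "sqrt (real (B1.q + 1) * (3 * real (card V) + 2 * real (B1.q + 1) - 7) / 12)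
      \<le> real B1.t + real B1.q \<longleftrightarrow>
      real (B1.q + 1) * (3 * real (card V) + 2 * real (B1.q + 1) - 7) \<le> 12 * (real B1.t + real B1.q)\<^sup>2"
    by (subst sqrt_le_iff_le_power2) auto
  then show ?thesis
    using wiener_moved_le_iff unfolding p t V'_def E'_def by (simp add: algebra_simps)
qed

end
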